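(* Consider the algorithm described in the context (with $n$ elements, $m$ rows, constants $\epsilon>0$, $0\le\delta\le1-\epsilon$, and an arbitrary possibly adaptive player). With probability at least $1-O(n^{-2})$, after $T=\frac{6}{\epsilon\gamma^2}n\log n$ steps there are no alive elements left.
   Context: Algorithm: $\gamma=\frac{1}{n^{10}m^4\log(mn)}$. Fractional colors start at $x_0(i)=0$; element $i$ is alive at the beginning of step $t$ if $|x_{t-1}(i)|<1-1/n$, and $N(t)$ is the set of alive elements. At each step $t=1,\dots,T$ while $N(t)\ne\emptyset$, a player chooses a nonempty $A(t)\subseteq N(t)$ and at most $\delta|A(t)|$ vectors $w_k\in\mathbb{R}^{A(t)}$; the algorithm computes vectors $u_i^t$ ($i\in A(t)$) with $\sum_i w_k(i)u_i^t=0$ for each $k$, $\|\sum_i b(i)u_i^t\|_2^2\le\frac1\beta\sum_i b(i)^2\|u_i^t\|_2^2$ for all $b$, $\|u_i^t\|_2\le1$ and $\sum_i\|u_i^t\|_2^2\ge(1-\delta-\beta)|A(t)|$ where $\beta=(1-\delta)/2$; it draws a uniformly random sign vector $r_t$ and updates $x_t(i)=x_{t-1}(i)+\gamma\langle r_t,u_i^t\rangle$ for $i\in A(t)$, leaving other coordinates unchanged. *)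

theory Defs
  imports "HOL-Probability.Probability"
begin

definition step_size :: "nat \<Rightarrow> nat \<Rightarrow> real" where
  "step_size n m = 1 / (real n ^ 10 * real m ^ 4 * ln (real m * real n))"

definition num_steps :: "real \<Rightarrow> nat \<Rightarrow> nat \<Rightarrow> nat" where
  "num_steps \<epsilon> n m = nat \<lceil>6 / (\<epsilon> * (step_size n m)\<^sup>2) * real n * ln (real n)\<rceil>"

text \<open>Sequences of T uniformly random sign vectors r_0,...,r_(T-1) in {-1,1}^d;
  r t j is coordinate j of the sign vector used at (0-indexed) step t.\<close>
definition sign_seqs :: "nat \<Rightarrow> nat \<Rightarrow> (nat \<Rightarrow> nat \<Rightarrow> real) set" where
  "sign_seqs T d = PiE {..<T} (\<lambda>_. PiE {..<d} (\<lambda>_. {-1, 1}))"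

text \<open>The choice made at a step: the set A(t), the list of vectors w_k (functions on
  element indices, only their values on A(t) matter), and the vectors u_i (u i j is
  coordinate j of u_i in R^d).\<close>
type_synonym choice = "nat set \<times> (nat \<Rightarrow> real) list \<times> (nat \<Rightarrow> nat \<Rightarrow> real)"

text \<open>A strategy (player together with the algorithm's computation of the u_i) maps the
  step index t and the sign sequence to the choice at step t.\<close>
type_synonym strategy = "nat \<Rightarrow> (nat \<Rightarrow> nat \<Rightarrow> real) \<Rightarrow> choice"

definition ch_A :: "choice \<Rightarrow> nat set" where "ch_A c = fst c"
definition ch_W :: "choice \<Rightarrow> (nat \<Rightarrow> real) list" where "ch_W c = fst (snd c)"
definition ch_U :: "choice \<Rightarrow> nat \<Rightarrow> nat \<Rightarrow> real" where "ch_U c = snd (snd c)"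

fun frac :: "nat \<Rightarrow> real \<Rightarrow> strategy \<Rightarrow> (nat \<Rightarrow> nat \<Rightarrow> real) \<Rightarrow> nat \<Rightarrow> nat \<Rightarrow> real" where
  "frac d g S r 0 i = 0"
| "frac d g S r (Suc t) i =
     (if i \<in> ch_A (S t r)
      then frac d g S r t i + g * (\<Sum>j<d. r t j * ch_U (S t r) i j)
      else frac d g S r t i)"

text \<open>Alive elements (among 0..n-1) after t steps, i.e. at the beginning of step t+1.\<close>
definition alive :: "nat \<Rightarrow> nat \<Rightarrow> real \<Rightarrow> strategy \<Rightarrow> (nat \<Rightarrow> nat \<Rightarrow> real) \<Rightarrow> nat \<Rightarrow> nat set" where
  "alive n d g S r t = {i. i < n \<and> \<bar>frac d g S r t i\<bar> < 1 - 1 / real n}"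

definition sqnorm :: "nat \<Rightarrow> (nat \<Rightarrow> real) \<Rightarrow> real" where
  "sqnorm d v = (\<Sum>j<d. (v j)\<^sup>2)"

definition valid_choice :: "nat \<Rightarrow> real \<Rightarrow> nat set \<Rightarrow> choice \<Rightarrow> bool" where
  "valid_choice d \<delta> N c \<longleftrightarrow>
     (let A = ch_A c; W = ch_W c; U = ch_U c; \<beta> = (1 - \<delta>) / 2 in
       A \<subseteq> N \<and>
       (N \<noteq> {} \<longrightarrow>
          A \<noteq> {} \<and>
          real (length W) \<le> \<delta> * real (card A) \<and>
          (\<forall>w \<in> set W. \<forall>j<d. (\<Sum>i\<in>A. w i * U i j) = 0) \<and>
          (\<forall>b :: nat \<Rightarrow> real. sqnorm d (\<lambda>j. \<Sum>i\<in>A. b i * U i j)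
               \<le> (1 / \<beta>) * (\<Sum>i\<in>A. (b i)\<^sup>2 * sqnorm d (U i))) \<and>
          (\<forall>i\<in>A. sqnorm d (U i) \<le> 1) \<and>
          (\<Sum>i\<in>A. sqnorm d (U i)) \<ge> (1 - \<delta> - \<beta>) * real (card A)))"

definition nonanticipating :: "nat \<Rightarrow> nat \<Rightarrow> strategy \<Rightarrow> bool" where
  "nonanticipating T d S \<longleftrightarrow>
     (\<forall>t<T. \<forall>r \<in> sign_seqs T d. \<forall>r' \<in> sign_seqs T d.
        (\<forall>s<t. r s = r' s) \<longrightarrow> S t r = S t r')"

definition valid_strategy :: "nat \<Rightarrow> nat \<Rightarrow> nat \<Rightarrow> real \<Rightarrow> real \<Rightarrow> strategy \<Rightarrow> bool" where
  "valid_strategy n T d g \<delta> S \<longleftrightarrow>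
     nonanticipating T d S \<and>
     (\<forall>t<T. \<forall>r \<in> sign_seqs T d. valid_choice d \<delta> (alive n d g S r t) (S t r))"

end

(*
  For an element i let V_i(t) = gamma^2 * sum_{s<t} |u_i^s|^2 be the variance accumulated by x(i),
  and consider the potential exp(V_i(t)) * cos(a * x_t(i)) with a = 29/20, frozen at the value
  cos(a * (1 + 1/30)) once i is dead. One random signing multiplies the mean of cos(a * x(i)) by
  prod_j cos(a * w_j) <= exp(-(1 + kappa) * |w|^2), where w = gamma * u_i and kappa > 0, which beats
  the factor exp(|w|^2) gained by the potential. Overshooting the frozen region by more than 1/30
  costs at most the Rademacher tail probability, O(|w|^4), which the gain kappa * |w|^2 absorbs once
  gamma is small. So the potential is a supermartingale, E exp(V_i(T)) = O(1), and by Markov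
  P(V_i(T) >= 3 ln n) = O(n^-3). Conversely, while some element is alive each step adds at least
  gamma^2 * eps / 2 to sum_i V_i, so if an element survives T steps some V_i(T) >= 3 ln n; a union
  bound over the n elements gives O(n^-2).
*)

theory Submission
  imports Defs
begin

subsection \<open>Sign vectors\<close>

definition signs :: "nat \<Rightarrow> (nat \<Rightarrow> real) set" where
  "signs d = PiE {..<d} (\<lambda>_. {-1, 1})"

lemma finite_signs [simp]: "finite (signs d)"
  unfolding signs_def by (intro finite_PiE) auto

lemma card_signs: "card (signs d) = 2 ^ d"
  unfolding signs_def by (subst card_PiE) (auto simp: numeral_2_eq_2)

lemma signs_nonempty: "signs d \<noteq> {}"
  unfolding signs_def by (simp add: PiE_eq_empty_iff)

lemma sum_signs_exp:
  fixes z :: "nat \<Rightarrow> 'a::{real_normed_field,banach}"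
  shows "(\<Sum>v\<in>signs d. exp (\<Sum>j<d. of_real (v j) * z j)) = (\<Prod>j<d. exp (z j) + exp (- z j))"
proof -
  have "(\<Prod>j<d. exp (z j) + exp (- z j)) = (\<Prod>j<d. \<Sum>y\<in>{-1,1::real}. exp (of_real y * z j))"
    by (intro prod.cong) (auto simp: add.commute)
  also have "\<dots> = (\<Sum>v\<in>signs d. \<Prod>j<d. exp (of_real (v j) * z j))"
    unfolding signs_def by (rule prod_sum_PiE) auto
  also have "\<dots> = (\<Sum>v\<in>signs d. exp (\<Sum>j<d. of_real (v j) * z j))"
    by (intro sum.cong refl) (simp add: exp_sum)
  finally show ?thesis ..
qed

lemma sum_signs_exp_real:
  fixes w :: "nat \<Rightarrow> real"
  shows "(\<Sum>v\<in>signs d. exp (\<Sum>j<d. v j * w j)) = (\<Prod>j<d. 2 * cosh (w j))"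
proof -
  have "2 * cosh y = exp y + exp (- y)" for y :: real
    by (simp add: cosh_def)
  then show ?thesis
    using sum_signs_exp[where z = w and d = d] by simp
qed

lemma sum_signs_cos:
  fixes w :: "nat \<Rightarrow> real"
  shows "(\<Sum>v\<in>signs d. cos (a * (x + (\<Sum>j<d. v j * w j))))
         = 2 ^ d * cos (a * x) * (\<Prod>j<d. cos (a * w j))"
proof -
  define z where "z j = \<i> * complex_of_real (a * w j)" for j
  have shift: "exp (\<i> * complex_of_real (a * (x + (\<Sum>j<d. v j * w j))))
      = exp (\<i> * complex_of_real (a * x)) * exp (\<Sum>j<d. of_real (v j) * z j)" for v
  proof -
    have "\<i> * complex_of_real (a * (x + (\<Sum>j<d. v j * w j))) =
          \<i> * complex_of_real (a * x) + (\<Sum>j<d. of_real (v j) * z j)"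
      by (simp add: z_def sum_distrib_left algebra_simps)
    then show ?thesis by (simp add: exp_add)
  qed
  have pair: "exp (z j) + exp (- z j) = complex_of_real (2 * cos (a * w j))" for j
  proof -
    have "exp (z j) = cis (a * w j)" "exp (- z j) = cis (- (a * w j))"
      by (simp_all add: z_def cis_conv_exp)
    then show ?thesis by (simp add: complex_eq_iff)
  qed
  have "(\<Sum>v\<in>signs d. cos (a * (x + (\<Sum>j<d. v j * w j))))
      = Re (\<Sum>v\<in>signs d. exp (\<i> * complex_of_real (a * (x + (\<Sum>j<d. v j * w j)))))"
    by (simp add: Re_sum Re_exp)
  also have "\<dots> = Re (exp (\<i> * complex_of_real (a * x)) * (\<Sum>v\<in>signs d. exp (\<Sum>j<d. of_real (v j) * z j)))"
    by (simp only: shift sum_distrib_left)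
  also have "\<dots> = Re (exp (\<i> * complex_of_real (a * x)) * complex_of_real (\<Prod>j<d. 2 * cos (a * w j)))"
    by (simp add: sum_signs_exp pair)
  also have "\<dots> = Re (exp (\<i> * complex_of_real (a * x))) * (\<Prod>j<d. 2 * cos (a * w j))"
    by (simp del: of_real_prod)
  also have "\<dots> = 2 ^ d * cos (a * x) * (\<Prod>j<d. cos (a * w j))"
    by (simp add: Re_exp prod.distrib)
  finally show ?thesis .
qed

subsection \<open>Tail bounds for Rademacher sums\<close>

lemma cosh_le_exp_half_sq: "cosh (y::real) \<le> exp (y^2 / 2)"
proof -
  have "cosh y \<le> exp (y^2 / 2)" if "y \<ge> 0" for y :: real
  proof -
    have "- (2 * y) * (1/2) + ln (1 + 1/2 * (exp (2 * y) - 1)) \<le> (2 * y)^2 / 8"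
      using Hoeffdings_lemma_aux[of "2 * y" "1/2"] that by simp
    moreover have "1 + 1/2 * (exp (2 * y) - 1) = exp y * cosh y"
      by (simp add: cosh_def field_simps exp_minus flip: exp_add)
    ultimately have "ln (cosh y) \<le> y^2 / 2"
      by (simp add: ln_mult power2_eq_square)
    then show ?thesis
      by (metis cosh_real_pos exp_le_cancel_iff exp_ln)
  qed
  from this[of "\<bar>y\<bar>"] show ?thesis
    by (cases "y \<ge> 0") auto
qed

lemma exp_neg_le_inverse_sq:
  assumes "(y::real) > 0"
  shows "exp (- y) \<le> 4 / y^2"
proof -
  have "1 + y/2 \<le> exp (y/2)" by (rule exp_ge_add_one_self)
  then have "(y/2)^2 \<le> exp (y/2) ^ 2" using assms by (intro power_mono) linarith+
  also have "exp (y/2) ^ 2 = exp y" by (simp flip: exp_add exp_of_nat_mult)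
  finally have "y^2 / 4 \<le> exp y" by (simp add: power_divide)
  then show ?thesis using assms by (simp add: exp_minus field_simps)
qed

lemma card_signs_tail_le_exp:
  fixes w :: "nat \<Rightarrow> real" and d :: nat
  defines "s \<equiv> \<Sum>j<d. (w j)^2"
  assumes "s > 0" and "\<eta> \<ge> 0"
  shows "real (card {v\<in>signs d. \<eta> < (\<Sum>j<d. v j * w j)}) \<le> 2 ^ d * exp (- (\<eta>^2 / (2 * s)))"
proof -
  define \<theta> where "\<theta> = \<eta> / s"
  let ?E = "{v\<in>signs d. \<eta> < (\<Sum>j<d. v j * w j)}"
  have "real (card ?E) = (\<Sum>v\<in>?E. 1)" by simp
  also have "\<dots> \<le> (\<Sum>v\<in>?E. exp (\<theta> * ((\<Sum>j<d. v j * w j) - \<eta>)))"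
  proof (rule sum_mono)
    fix v assume "v \<in> ?E"
    then have "0 \<le> \<theta> * ((\<Sum>j<d. v j * w j) - \<eta>)"
      using assms by (auto simp: \<theta>_def)
    then show "1 \<le> exp (\<theta> * ((\<Sum>j<d. v j * w j) - \<eta>))" by simp
  qed
  also have "\<dots> \<le> (\<Sum>v\<in>signs d. exp (\<theta> * ((\<Sum>j<d. v j * w j) - \<eta>)))"
    by (intro sum_mono2) auto
  also have "\<dots> = exp (- \<theta> * \<eta>) * (\<Sum>v\<in>signs d. exp (\<Sum>j<d. v j * (\<theta> * w j)))"
    by (simp add: sum_distrib_left right_diff_distrib mult.left_commute flip: exp_add)
  also have "\<dots> = exp (- \<theta> * \<eta>) * (\<Prod>j<d. 2 * cosh (\<theta> * w j))"
    by (simp add: sum_signs_exp_real)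
  also have "\<dots> \<le> exp (- \<theta> * \<eta>) * (\<Prod>j<d. 2 * exp ((\<theta> * w j)^2 / 2))"
    by (intro mult_left_mono prod_mono conjI mult_left_mono cosh_le_exp_half_sq)
      (auto intro: less_imp_le cosh_real_pos)
  also have "(\<Prod>j<d. 2 * exp ((\<theta> * w j)^2 / 2)) = 2 ^ d * exp (\<theta>^2 * s / 2)"
    by (simp add: prod.distrib s_def power_mult_distrib sum_distrib_left sum_divide_distrib
        flip: exp_sum)
  also have "exp (- \<theta> * \<eta>) * (2 ^ d * exp (\<theta>^2 * s / 2)) = 2 ^ d * exp (- \<theta> * \<eta> + \<theta>^2 * s / 2)"
    unfolding exp_add by (simp only: mult.left_commute)
  also have "- \<theta> * \<eta> + \<theta>^2 * s / 2 = - (\<eta>^2 / (2 * s))"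
    using assms by (simp add: \<theta>_def field_simps power2_eq_square)
  finally show ?thesis .
qed

lemma card_signs_tail_le:
  fixes w :: "nat \<Rightarrow> real"
  assumes "\<eta> > 0"
  shows "real (card {v\<in>signs d. \<eta> < (\<Sum>j<d. v j * w j)}) \<le> 2 ^ d * (16 * (\<Sum>j<d. (w j)^2)^2 / \<eta>^4)"
proof (cases "(\<Sum>j<d. (w j)^2) = 0")
  case True
  then have "\<forall>j<d. w j = 0" by (simp add: sum_nonneg_eq_0_iff)
  then have "{v\<in>signs d. \<eta> < (\<Sum>j<d. v j * w j)} = {}" using assms by auto
  then show ?thesis by (simp only: card.empty of_nat_0) simp
next
  case False
  define s where "s = (\<Sum>j<d. (w j)^2)"
  have "s > 0" using False unfolding s_def by (metis sum_nonneg zero_le_power2 order_le_less)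
  have "exp (- (\<eta>^2 / (2 * s))) \<le> 4 / (\<eta>^2 / (2 * s))^2"
    by (rule exp_neg_le_inverse_sq) (use \<open>s > 0\<close> assms in simp)
  also have "\<dots> = 16 * s^2 / \<eta>^4"
    using \<open>s > 0\<close> assms by (simp add: field_simps power2_eq_square power4_eq_xxxx)
  finally have "2 ^ d * exp (- (\<eta>^2 / (2 * s))) \<le> 2 ^ d * (16 * s^2 / \<eta>^4)"
    by (intro mult_left_mono) auto
  with card_signs_tail_le_exp[where w = w and d = d and \<eta> = \<eta>] \<open>s > 0\<close> assms show ?thesis
    unfolding s_def by simp
qed

lemma card_signs_abs_tail_le:
  fixes w :: "nat \<Rightarrow> real"
  assumes "\<eta> > 0"
  shows "real (card {v\<in>signs d. \<eta> < \<bar>\<Sum>j<d. v j * w j\<bar>}) \<le> 2 ^ d * (32 * (\<Sum>j<d. (w j)^2)^2 / \<eta>^4)"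
proof -
  let ?pos = "{v\<in>signs d. \<eta> < (\<Sum>j<d. v j * w j)}"
  let ?neg = "{v\<in>signs d. \<eta> < (\<Sum>j<d. v j * (- w j))}"
  have "{v\<in>signs d. \<eta> < \<bar>\<Sum>j<d. v j * w j\<bar>} \<subseteq> ?pos \<union> ?neg"
    by (auto simp: sum_negf)
  then have "card {v\<in>signs d. \<eta> < \<bar>\<Sum>j<d. v j * w j\<bar>} \<le> card (?pos \<union> ?neg)"
    by (intro card_mono) auto
  also have "\<dots> \<le> card ?pos + card ?neg"
    by (rule card_Un_le)
  finally have "card {v\<in>signs d. \<eta> < \<bar>\<Sum>j<d. v j * w j\<bar>} \<le> card ?pos + card ?neg" .
  then show ?thesis
    using card_signs_tail_le[OF assms, of d w] card_signs_tail_le[OF assms, of d "\<lambda>j. - w j"]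
    by simp
qed

subsection \<open>The one-step inequality for the potential\<close>

lemma cos_le_exp_neg_sq:
  assumes "y^2 \<le> 12/25"
  shows "cos (y::real) \<le> exp (- (24/25) * y^2 / 2)"
proof -
  obtain t where t: "cos y = (\<Sum>m<4. cos_coeff m * y ^ m) + (cos (t + 1/2 * real 4 * pi) / fact 4) * y ^ 4"
    using Maclaurin_cos_expansion[of y 4] by blast
  have "{..<4::nat} = {0,1,2,3}" by auto
  then have "(\<Sum>m<4. cos_coeff m * y ^ m) = 1 - y^2/2"
    by (simp add: cos_coeff_def)
  moreover have "(cos (t + 1/2 * real 4 * pi) / fact 4) * y ^ 4 \<le> y^4 / 24"
  proof -
    have "cos (t + 1/2 * real 4 * pi) * y^4 \<le> 1 * y^4"
      by (rule mult_right_mono) (simp_all add: zero_le_even_power)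
    moreover have "(fact 4 :: real) = 24" by (simp add: numeral_eq_Suc)
    ultimately show ?thesis by simp
  qed
  moreover have "y^4 \<le> y^2 * (12/25)"
    using mult_left_mono[OF assms, of "y^2"] by (simp add: power4_eq_xxxx power2_eq_square)
  ultimately have "cos y \<le> 1 - (24/25) * y^2 / 2"
    using t by linarith
  also have "\<dots> \<le> exp (- (24/25) * y^2 / 2)"
    using exp_ge_add_one_self[of "- (24/25) * y^2 / 2"] by simp
  finally show ?thesis .
qed

lemma exp_neg_le_one_minus_half:
  assumes "0 \<le> (y::real)" "y \<le> 1"
  shows "exp (- y) \<le> 1 - y / 2"
proof -
  have "exp (- y) \<le> 1 / (1 + y)"
    using exp_ge_add_one_self[of y] assms by (simp add: exp_minus field_simps)
  also have "\<dots> \<le> 1 - y / 2"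
  proof -
    have "y * y \<le> y * 1"
      using assms by (intro mult_left_mono) auto
    then have "1 \<le> (1 - y / 2) * (1 + y)"
      by (simp add: algebra_simps)
    then show ?thesis
      using assms by (simp add: divide_le_eq)
  qed
  finally show ?thesis .
qed

text \<open>Since \<open>freq * (1 + overshoot) < pi / 2\<close>, every cosine entering the potential stays
  positive; since \<open>(24/25) * freq^2 / 2 > 1\<close>, one step shrinks the mean cosine by more than
  \<open>exp\<close> of the variance it adds.\<close>

definition freq :: real where "freq = 29/20"
definition overshoot :: real where "overshoot = 1/30"
definition dead_val :: real where "dead_val = cos (freq * (1 + overshoot))"
definition cos_floor :: real where "cos_floor = cos freq"
definition decay :: real where "decay = (24/25) * freq^2 / 2 - 1"
definition max_step_var :: real where
  "max_step_var = min (1/10) (cos_floor * decay * overshoot^4 / 256)"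

lemma overshoot_pos: "overshoot > 0"
  by (simp add: overshoot_def)

lemma decay_pos: "decay > 0" and decay_le_1: "decay \<le> 1"
  by (simp_all add: decay_def freq_def power2_eq_square)

lemma dead_val_pos: "dead_val > 0"
  unfolding dead_val_def freq_def overshoot_def using pi_gt3 by (intro cos_gt_zero_pi) auto

lemma cos_freq_antimono:
  assumes "\<bar>y\<bar> \<le> b" and "b \<le> 1 + overshoot"
  shows "cos (freq * b) \<le> cos (freq * y)"
proof -
  have "cos (freq * y) = cos (freq * \<bar>y\<bar>)"
    by (cases "y \<ge> 0") auto
  moreover have "freq * \<bar>y\<bar> \<le> freq * b"
    using assms by (intro mult_left_mono) (auto simp: freq_def)
  moreover have "freq * b \<le> pi"
    using assms pi_gt3 mult_left_mono[OF assms(2), of freq] by (simp add: freq_def overshoot_def)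
  ultimately show ?thesis
    by (simp add: cos_mono_le_eq freq_def)
qed

lemma dead_val_le_cos_floor: "dead_val \<le> cos_floor"
  using cos_freq_antimono[of 1 "1 + overshoot"] overshoot_pos
  by (simp add: dead_val_def cos_floor_def)

lemma cos_floor_pos: "cos_floor > 0"
  using dead_val_le_cos_floor dead_val_pos by linarith

lemma max_step_var_pos: "max_step_var > 0"
  using cos_floor_pos decay_pos overshoot_pos by (simp add: max_step_var_def)

lemma prod_cos_freq_le:
  fixes w :: "nat \<Rightarrow> real"
  assumes "(\<Sum>j<d. (w j)^2) \<le> 1/10"
  shows "(\<Prod>j<d. cos (freq * w j)) \<le> exp (- (24/25) * freq^2 * (\<Sum>j<d. (w j)^2) / 2)"
proof -
  have small: "(freq * w j)^2 \<le> 12/25" if "j < d" for j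
  proof -
    have "(w j)^2 \<le> (\<Sum>j<d. (w j)^2)"
      using that by (intro member_le_sum) auto
    moreover have "(freq * w j)^2 = (841/400) * (w j)^2"
      by (simp add: freq_def power2_eq_square)
    ultimately show ?thesis
      using assms by linarith
  qed
  have nonneg: "0 \<le> cos (freq * w j)" if "j < d" for j
  proof -
    have "(freq * w j)^2 \<le> 1"
      using small[OF that] by simp
    then have "\<bar>freq * w j\<bar> \<le> 1"
      by (simp add: abs_square_le_1)
    then show ?thesis
      using pi_gt3 by (intro cos_ge_zero) auto
  qed
  have "(\<Prod>j<d. cos (freq * w j)) \<le> (\<Prod>j<d. exp (- (24/25) * (freq * w j)^2 / 2))"
    using nonneg small cos_le_exp_neg_sq by (intro prod_mono) blast
  also have "\<dots> = exp (- (24/25) * freq^2 * (\<Sum>j<d. (w j)^2) / 2)"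
    by (simp add: sum_distrib_left sum_divide_distrib power_mult_distrib mult.assoc flip: exp_sum)
  finally show ?thesis .
qed

definition frozen_cos :: "real \<Rightarrow> real \<Rightarrow> real" where
  "frozen_cos L y = (if \<bar>y\<bar> < L then cos (freq * y) else dead_val)"

lemma frozen_cos_le:
  assumes "\<bar>x\<bar> < L" and "L \<le> 1"
  shows "frozen_cos L (x + z) \<le> cos (freq * (x + z)) + (if overshoot < \<bar>z\<bar> then 2 else 0)"
proof (cases "\<bar>x + z\<bar> < L")
  case False
  show ?thesis
  proof (cases "overshoot < \<bar>z\<bar>")
    case True
    have "frozen_cos L (x + z) = dead_val" "dead_val \<le> 1"
      using False by (simp_all add: frozen_cos_def dead_val_def)
    moreover have "(if overshoot < \<bar>z\<bar> then 2 else 0) = (2::real)"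
      using True by simp
    ultimately show ?thesis
      using cos_ge_minus_one[of "freq * (x + z)"] by linarith
  next
    case small: False
    then have "\<bar>x + z\<bar> \<le> 1 + overshoot"
      using assms by linarith
    then show ?thesis
      using False small cos_freq_antimono[of "x + z" "1 + overshoot"]
      by (simp add: frozen_cos_def dead_val_def)
  qed
qed (simp add: frozen_cos_def)

lemma sum_frozen_cos_le:
  fixes w :: "nat \<Rightarrow> real"
  assumes "\<bar>x\<bar> < L" and "L \<le> 1"
  shows "(\<Sum>v\<in>signs d. frozen_cos L (x + (\<Sum>j<d. v j * w j)))
    \<le> 2 ^ d * cos (freq * x) * (\<Prod>j<d. cos (freq * w j))
      + 2 ^ d * (64 * (\<Sum>j<d. (w j)^2)^2 / overshoot^4)"
proof -
  define Z where "Z v = (\<Sum>j<d. v j * w j)" for v :: "nat \<Rightarrow> real"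
  have "(\<Sum>v\<in>signs d. frozen_cos L (x + Z v))
      \<le> (\<Sum>v\<in>signs d. cos (freq * (x + Z v)) + (if overshoot < \<bar>Z v\<bar> then 2 else 0))"
    using assms by (intro sum_mono frozen_cos_le)
  also have "\<dots> = (\<Sum>v\<in>signs d. cos (freq * (x + Z v)))
      + 2 * real (card {v\<in>signs d. overshoot < \<bar>Z v\<bar>})"
    by (simp add: sum.distrib sum.If_cases Int_def conj_commute)
  also have "\<dots> \<le> 2 ^ d * cos (freq * x) * (\<Prod>j<d. cos (freq * w j))
      + 2 ^ d * (64 * (\<Sum>j<d. (w j)^2)^2 / overshoot^4)"
  proof -
    have "2 * real (card {v\<in>signs d. overshoot < \<bar>Z v\<bar>})
        \<le> 2 * (2 ^ d * (32 * (\<Sum>j<d. (w j)^2)^2 / overshoot^4))"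
      using card_signs_abs_tail_le[OF overshoot_pos, of d w] unfolding Z_def by linarith
    then show ?thesis
      by (simp add: Z_def sum_signs_cos ac_simps)
  qed
  finally show ?thesis
    unfolding Z_def .
qed

lemma exp_mul_prod_cos_freq_le:
  fixes w :: "nat \<Rightarrow> real" and d :: nat
  defines "s \<equiv> \<Sum>j<d. (w j)^2"
  assumes "s \<le> 1/10"
  shows "exp s * (\<Prod>j<d. cos (freq * w j)) \<le> 1 - decay * s / 2"
proof -
  have "0 \<le> s"
    unfolding s_def by (intro sum_nonneg) auto
  have "exp s * (\<Prod>j<d. cos (freq * w j)) \<le> exp s * exp (- (24/25) * freq^2 * s / 2)"
    using prod_cos_freq_le[OF assms(2)[unfolded s_def]] by (simp add: s_def)
  also have "\<dots> = exp (- (decay * s))"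
    by (simp add: decay_def field_simps flip: exp_add)
  also have "\<dots> \<le> 1 - decay * s / 2"
    using decay_pos \<open>0 \<le> s\<close> assms(2) mult_mono[OF decay_le_1, of s 1]
    by (intro exp_neg_le_one_minus_half) auto
  finally show ?thesis .
qed

lemma sum_frozen_cos_step_le:
  fixes w :: "nat \<Rightarrow> real" and d :: nat
  defines "s \<equiv> \<Sum>j<d. (w j)^2"
  assumes "\<bar>x\<bar> < L" and "L \<le> 1" and "s \<le> max_step_var"
  shows "exp s * (\<Sum>v\<in>signs d. frozen_cos L (x + (\<Sum>j<d. v j * w j))) \<le> 2 ^ d * cos (freq * x)"
proof -
  define P where "P = (\<Prod>j<d. cos (freq * w j))"
  have s0: "0 \<le> s" and s1: "s \<le> 1/10" and s_small: "s \<le> cos_floor * decay * overshoot^4 / 256"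
    using assms(4) by (auto simp: s_def max_step_var_def intro: sum_nonneg)
  have cx: "cos_floor \<le> cos (freq * x)"
    using cos_freq_antimono[of x 1] assms overshoot_pos by (simp add: cos_floor_def)
  have "exp s \<le> 2"
    using exp_bound_half[of s] s0 s1 by simp
  then have tail: "exp s * (64 * s^2 / overshoot^4) \<le> 128 * s^2 / overshoot^4"
    using mult_right_mono[of "exp s" 2 "64 * s^2 / overshoot^4"] by simp
  have "128 * s^2 / overshoot^4 \<le> cos_floor * decay * s / 2"
    using mult_left_mono[OF s_small s0] overshoot_pos by (simp add: field_simps power2_eq_square)
  also have "\<dots> \<le> cos (freq * x) * decay * s / 2"
    using cx decay_pos s0 by (intro divide_right_mono mult_right_mono) auto
  finally have gain: "128 * s^2 / overshoot^4 \<le> cos (freq * x) * decay * s / 2" .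
  have "cos (freq * x) * (exp s * P) \<le> cos (freq * x) * (1 - decay * s / 2)"
    using exp_mul_prod_cos_freq_le[of w d] s1 cx cos_floor_pos
    by (intro mult_left_mono) (auto simp: P_def s_def)
  then have "cos (freq * x) * (exp s * P) \<le> cos (freq * x) - cos (freq * x) * decay * s / 2"
    by (simp add: algebra_simps)
  then have "cos (freq * x) * (exp s * P) + exp s * (64 * s^2 / overshoot^4) \<le> cos (freq * x)"
    using tail gain by linarith
  then have "2 ^ d * (exp s * (cos (freq * x) * P + 64 * s^2 / overshoot^4)) \<le> 2 ^ d * cos (freq * x)"
    by (intro mult_left_mono) (auto simp: algebra_simps)
  moreover have "exp s * (\<Sum>v\<in>signs d. frozen_cos L (x + (\<Sum>j<d. v j * w j)))
      \<le> exp s * (2 ^ d * cos (freq * x) * P + 2 ^ d * (64 * s^2 / overshoot^4))"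
    using sum_frozen_cos_le[OF assms(2,3), where d = d and w = w] by (simp add: P_def s_def)
  ultimately show ?thesis
    by (simp add: algebra_simps)
qed

subsection \<open>Sign sequences and non-anticipating strategies\<close>

lemma sign_seqs_eq_PiE_signs: "sign_seqs T d = PiE {..<T} (\<lambda>_. signs d)"
  unfolding sign_seqs_def signs_def ..

lemma finite_sign_seqs [simp]: "finite (sign_seqs T d)"
  unfolding sign_seqs_eq_PiE_signs by (intro finite_PiE) auto

lemma sign_seqs_nonempty [simp]: "sign_seqs T d \<noteq> {}"
  unfolding sign_seqs_eq_PiE_signs using signs_nonempty by (simp add: PiE_eq_empty_iff)

lemma fun_upd_in_sign_seqs:
  "r \<in> sign_seqs T d \<Longrightarrow> t < T \<Longrightarrow> v \<in> signs d \<Longrightarrow> r(t := v) \<in> sign_seqs T d"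
  unfolding sign_seqs_eq_PiE_signs by (auto simp: PiE_def extensional_def)

lemma sign_seqs_apply_in_signs: "r \<in> sign_seqs T d \<Longrightarrow> t < T \<Longrightarrow> r t \<in> signs d"
  unfolding sign_seqs_eq_PiE_signs by auto

text \<open>Resampling the signs of one step preserves the uniform distribution; the map
  \<open>(r, v) \<mapsto> (r(t := v), r t)\<close> is an involution of \<open>sign_seqs T d \<times> signs d\<close>.\<close>

lemma sum_sign_seqs_fun_upd:
  assumes "t < T"
  shows "(\<Sum>r\<in>sign_seqs T d. \<Sum>v\<in>signs d. f (r(t := v))) = 2 ^ d * (\<Sum>r\<in>sign_seqs T d. (f r :: real))"
proof -
  let ?O = "sign_seqs T d" and ?V = "signs d"
  define h where "h p = ((fst p)(t := snd p), fst p t)" for p :: "(nat \<Rightarrow> nat \<Rightarrow> real) \<times> (nat \<Rightarrow> real)"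
  have "bij_betw h (?O \<times> ?V) (?O \<times> ?V)"
    by (rule bij_betw_byWitness[where f' = h])
      (use assms in \<open>auto simp: h_def intro: fun_upd_in_sign_seqs sign_seqs_apply_in_signs\<close>)
  then have "(\<Sum>p\<in>?O \<times> ?V. f (fst (h p))) = (\<Sum>p\<in>?O \<times> ?V. f (fst p))"
    using sum.reindex_bij_betw[of h "?O \<times> ?V" "?O \<times> ?V" "\<lambda>p. f (fst p)"] by simp
  moreover have "(\<Sum>r\<in>?O. \<Sum>v\<in>?V. f (r(t := v))) = (\<Sum>p\<in>?O \<times> ?V. f (fst (h p)))"
    by (simp add: sum.cartesian_product h_def split_def)
  moreover have "(\<Sum>p\<in>?O \<times> ?V. f (fst p)) = (\<Sum>r\<in>?O. \<Sum>v\<in>?V. f r)"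
    by (simp only: sum.cartesian_product split_def)
  ultimately show ?thesis
    by (simp add: card_signs flip: sum_distrib_left)
qed

lemma nonanticipating_eq:
  assumes "nonanticipating T d S" "t < T" "r \<in> sign_seqs T d" "r' \<in> sign_seqs T d" "\<forall>s<t. r s = r' s"
  shows "S t r = S t r'"
  using assms unfolding nonanticipating_def by blast

lemma frac_eq_if_prefix_eq:
  assumes "nonanticipating T d S" "r \<in> sign_seqs T d" "r' \<in> sign_seqs T d"
    and "t \<le> T" "\<forall>s<t. r s = r' s"
  shows "frac d g S r t i = frac d g S r' t i"
  using assms(4,5)
proof (induction t arbitrary: i)
  case (Suc t)
  then have "S t r = S t r'" and "r t = r' t"
    using nonanticipating_eq[OF assms(1) _ assms(2,3)] by auto
  with Suc show ?case
    by simp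
qed simp

definition acc_var :: "nat \<Rightarrow> real \<Rightarrow> strategy \<Rightarrow> (nat \<Rightarrow> nat \<Rightarrow> real) \<Rightarrow> nat \<Rightarrow> nat \<Rightarrow> real" where
  "acc_var d g S r t i = (\<Sum>s<t. if i \<in> ch_A (S s r) then g^2 * sqnorm d (ch_U (S s r) i) else 0)"

lemma acc_var_Suc:
  "acc_var d g S r (Suc t) i =
     acc_var d g S r t i + (if i \<in> ch_A (S t r) then g^2 * sqnorm d (ch_U (S t r) i) else 0)"
  unfolding acc_var_def by simp

lemma acc_var_eq_if_prefix_eq:
  assumes "nonanticipating T d S" "r \<in> sign_seqs T d" "r' \<in> sign_seqs T d"
    and "t \<le> T" "\<forall>s<t. r s = r' s"
  shows "acc_var d g S r t i = acc_var d g S r' t i"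
  unfolding acc_var_def using nonanticipating_eq[OF assms(1) _ assms(2,3)] assms(4,5)
  by (intro sum.cong) auto

lemma frac_fun_upd_Suc:
  assumes "nonanticipating T d S" "t < T" "r \<in> sign_seqs T d" "v \<in> signs d"
  shows "frac d g S (r(t := v)) (Suc t) i =
    (if i \<in> ch_A (S t r) then frac d g S r t i + g * (\<Sum>j<d. v j * ch_U (S t r) i j)
     else frac d g S r t i)"
proof -
  have r': "r(t := v) \<in> sign_seqs T d"
    using assms by (intro fun_upd_in_sign_seqs)
  have "S t (r(t := v)) = S t r"
    using assms(1,2) r' assms(3) by (rule nonanticipating_eq) simp
  moreover have "frac d g S (r(t := v)) t j = frac d g S r t j" for j
    using assms(1) r' assms(3) by (rule frac_eq_if_prefix_eq) (use assms(2) in auto)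
  ultimately show ?thesis
    by simp
qed

lemma acc_var_fun_upd_Suc:
  assumes "nonanticipating T d S" "t < T" "r \<in> sign_seqs T d" "v \<in> signs d"
  shows "acc_var d g S (r(t := v)) (Suc t) i =
    acc_var d g S r t i + (if i \<in> ch_A (S t r) then g^2 * sqnorm d (ch_U (S t r) i) else 0)"
proof -
  have r': "r(t := v) \<in> sign_seqs T d"
    using assms by (intro fun_upd_in_sign_seqs)
  have "S t (r(t := v)) = S t r"
    using assms(1,2) r' assms(3) by (rule nonanticipating_eq) simp
  moreover have "acc_var d g S (r(t := v)) t i = acc_var d g S r t i"
    using assms(1) r' assms(3) by (rule acc_var_eq_if_prefix_eq) (use assms(2) in auto)
  ultimately show ?thesis
    by (simp add: acc_var_Suc)
qed

lemma valid_strategy_choice: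
  "valid_strategy n T d g \<delta> S \<Longrightarrow> t < T \<Longrightarrow> r \<in> sign_seqs T d \<Longrightarrow>
    valid_choice d \<delta> (alive n d g S r t) (S t r)"
  unfolding valid_strategy_def by blast

lemma valid_choice_subset: "valid_choice d \<delta> N c \<Longrightarrow> ch_A c \<subseteq> N"
  unfolding valid_choice_def Let_def by blast

lemma alive_Suc_subset:
  assumes "valid_strategy n T d g \<delta> S" "t < T" "r \<in> sign_seqs T d"
  shows "alive n d g S r (Suc t) \<subseteq> alive n d g S r t"
  using valid_choice_subset[OF valid_strategy_choice[OF assms]] by (auto simp: alive_def)

lemma alive_antimono:
  assumes "valid_strategy n T d g \<delta> S" "r \<in> sign_seqs T d" "s \<le> t" "t \<le> T"
  shows "alive n d g S r t \<subseteq> alive n d g S r s"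
  using assms(3,4)
proof (induction t)
  case (Suc t)
  then show ?case
    using alive_Suc_subset[OF assms(1) _ assms(2), of t] by (cases "s = Suc t") auto
qed simp

subsection \<open>The potential is a supermartingale\<close>

definition potential ::
  "real \<Rightarrow> nat \<Rightarrow> real \<Rightarrow> strategy \<Rightarrow> (nat \<Rightarrow> nat \<Rightarrow> real) \<Rightarrow> nat \<Rightarrow> nat \<Rightarrow> real" where
  "potential L d g S r t i = exp (acc_var d g S r t i) * frozen_cos L (frac d g S r t i)"

lemma frozen_cos_ge_dead_val:
  assumes "L \<le> 1"
  shows "dead_val \<le> frozen_cos L y"
  using assms overshoot_pos cos_freq_antimono[of y "1 + overshoot"]
  by (simp add: frozen_cos_def dead_val_def)

lemma potential_ge:
  "L \<le> 1 \<Longrightarrow> exp (acc_var d g S r t i) * dead_val \<le> potential L d g S r t i"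
  unfolding potential_def by (intro mult_left_mono frozen_cos_ge_dead_val) auto

lemma potential_fun_upd_Suc:
  assumes "nonanticipating T d S" "t < T" "r \<in> sign_seqs T d" "v \<in> signs d"
  shows "potential L d g S (r(t := v)) (Suc t) i =
    (if i \<in> ch_A (S t r)
     then exp (acc_var d g S r t i) * (exp (g^2 * sqnorm d (ch_U (S t r) i)) *
       frozen_cos L (frac d g S r t i + (\<Sum>j<d. v j * (g * ch_U (S t r) i j))))
     else potential L d g S r t i)"
  using frac_fun_upd_Suc[OF assms] acc_var_fun_upd_Suc[OF assms]
  by (simp add: potential_def exp_add sum_distrib_left ac_simps)

lemma sum_signs_potential_fun_upd_le:
  assumes vs: "valid_strategy n T d g \<delta> S" and t: "t < T" and r: "r \<in> sign_seqs T d"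
    and "i < n" and "g^2 \<le> max_step_var"
  defines "L \<equiv> 1 - 1 / real n"
  shows "(\<Sum>v\<in>signs d. potential L d g S (r(t := v)) (Suc t) i) \<le> 2 ^ d * potential L d g S r t i"
proof -
  have na: "nonanticipating T d S"
    using vs by (simp add: valid_strategy_def)
  define U where "U = ch_U (S t r)"
  define x where "x = frac d g S r t i"
  define w where "w j = g * U i j" for j
  define s where "s = g^2 * sqnorm d (U i)"
  show ?thesis
  proof (cases "i \<in> ch_A (S t r)")
    case False
    then show ?thesis
      by (simp add: potential_fun_upd_Suc[OF na t r] card_signs)
  next
    case True
    have vc: "valid_choice d \<delta> (alive n d g S r t) (S t r)"
      using valid_strategy_choice[OF vs t r] .
    then have alive: "i \<in> alive n d g S r t"
      using True valid_choice_subset by blast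
    then have "sqnorm d (U i) \<le> 1"
      using vc True unfolding valid_choice_def U_def Let_def by blast
    then have "s \<le> max_step_var"
      using assms(5) mult_left_mono[of "sqnorm d (U i)" 1 "g^2"] by (simp add: s_def)
    moreover have "(\<Sum>j<d. (w j)^2) = s"
      by (simp add: w_def s_def sqnorm_def power_mult_distrib sum_distrib_left)
    moreover have "\<bar>x\<bar> < L" "L \<le> 1"
      using alive by (simp_all add: alive_def x_def L_def)
    ultimately have step: "exp s * (\<Sum>v\<in>signs d. frozen_cos L (x + (\<Sum>j<d. v j * w j)))
        \<le> 2 ^ d * cos (freq * x)"
      using sum_frozen_cos_step_le[where d = d and w = w and x = x and L = L] by simp
    have "(\<Sum>v\<in>signs d. potential L d g S (r(t := v)) (Suc t) i)
        = exp (acc_var d g S r t i) * (exp s * (\<Sum>v\<in>signs d. frozen_cos L (x + (\<Sum>j<d. v j * w j))))"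
      using True by (simp add: potential_fun_upd_Suc[OF na t r] U_def x_def w_def s_def sum_distrib_left)
    also have "\<dots> \<le> exp (acc_var d g S r t i) * (2 ^ d * cos (freq * x))"
      using step by (intro mult_left_mono) auto
    also have "\<dots> = 2 ^ d * potential L d g S r t i"
      using \<open>\<bar>x\<bar> < L\<close> by (simp add: potential_def frozen_cos_def x_def)
    finally show ?thesis .
  qed
qed

lemma sum_potential_Suc_le:
  assumes "valid_strategy n T d g \<delta> S" and "t < T" and "i < n" and "g^2 \<le> max_step_var"
  defines "L \<equiv> 1 - 1 / real n"
  shows "(\<Sum>r\<in>sign_seqs T d. potential L d g S r (Suc t) i) \<le> (\<Sum>r\<in>sign_seqs T d. potential L d g S r t i)"
proof -
  have "2 ^ d * (\<Sum>r\<in>sign_seqs T d. potential L d g S r (Suc t) i)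
      = (\<Sum>r\<in>sign_seqs T d. \<Sum>v\<in>signs d. potential L d g S (r(t := v)) (Suc t) i)"
    by (rule sum_sign_seqs_fun_upd[OF assms(2), symmetric])
  also have "\<dots> \<le> (\<Sum>r\<in>sign_seqs T d. 2 ^ d * potential L d g S r t i)"
    unfolding L_def using assms by (intro sum_mono sum_signs_potential_fun_upd_le)
  also have "\<dots> = 2 ^ d * (\<Sum>r\<in>sign_seqs T d. potential L d g S r t i)"
    by (simp add: sum_distrib_left)
  finally show ?thesis
    by simp
qed

lemma sum_potential_le_card:
  assumes "valid_strategy n T d g \<delta> S" and "i < n" and "g^2 \<le> max_step_var" and "t \<le> T"
  shows "(\<Sum>r\<in>sign_seqs T d. potential (1 - 1 / real n) d g S r t i) \<le> card (sign_seqs T d)"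
  using assms(4)
proof (induction t)
  case 0
  have "potential L d g S r 0 i \<le> 1" for L r
    by (simp add: potential_def acc_var_def frozen_cos_def dead_val_def)
  then show ?case
    using sum_mono[of "sign_seqs T d" "\<lambda>r. potential (1 - 1 / real n) d g S r 0 i" "\<lambda>_. 1"] by simp
next
  case (Suc t)
  then show ?case
    using sum_potential_Suc_le[OF assms(1) _ assms(2,3), of t] by simp
qed

lemma card_acc_var_ge_le:
  assumes "valid_strategy n T d g \<delta> S" and "i < n" and "g^2 \<le> max_step_var"
  shows "real (card {r\<in>sign_seqs T d. c \<le> acc_var d g S r T i}) * (exp c * dead_val)
    \<le> card (sign_seqs T d)"
proof -
  let ?O = "sign_seqs T d" and ?L = "1 - 1 / real n"
  let ?E = "{r\<in>?O. c \<le> acc_var d g S r T i}"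
  have "real (card ?E) * (exp c * dead_val) = (\<Sum>r\<in>?E. exp c * dead_val)"
    by simp
  also have "\<dots> \<le> (\<Sum>r\<in>?E. potential ?L d g S r T i)"
  proof (rule sum_mono)
    fix r assume "r \<in> ?E"
    then have "exp c * dead_val \<le> exp (acc_var d g S r T i) * dead_val"
      using dead_val_pos by (intro mult_right_mono) auto
    also have "\<dots> \<le> potential ?L d g S r T i"
      by (rule potential_ge) simp
    finally show "exp c * dead_val \<le> potential ?L d g S r T i" .
  qed
  also have "\<dots> \<le> (\<Sum>r\<in>?O. potential ?L d g S r T i)"
  proof (rule sum_mono2)
    fix r
    have "0 \<le> exp (acc_var d g S r T i) * dead_val"
      using dead_val_pos by simp
    also have "\<dots> \<le> potential ?L d g S r T i"
      by (rule potential_ge) simp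
    finally show "0 \<le> potential ?L d g S r T i" .
  qed auto
  also have "\<dots> \<le> card ?O"
    using assms by (intro sum_potential_le_card) auto
  finally show ?thesis .
qed

subsection \<open>While some element is alive, the variance keeps growing\<close>

lemma sum_step_var_ge:
  assumes vs: "valid_strategy n T d g \<delta> S" and s: "s < T" and r: "r \<in> sign_seqs T d"
    and alive: "alive n d g S r s \<noteq> {}" and "\<epsilon> > 0" and "0 \<le> \<delta>" and "\<delta> \<le> 1 - \<epsilon>"
  shows "g^2 * (\<epsilon> / 2) \<le> (\<Sum>i<n. if i \<in> ch_A (S s r) then g^2 * sqnorm d (ch_U (S s r) i) else 0)"
proof -
  define A where "A = ch_A (S s r)"
  have vc: "valid_choice d \<delta> (alive n d g S r s) (S s r)"
    using valid_strategy_choice[OF vs s r] .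
  then have "A \<subseteq> {..<n}"
    using valid_choice_subset unfolding A_def alive_def by fastforce
  moreover have "A \<noteq> {}"
    and mass: "(1 - \<delta> - (1 - \<delta>) / 2) * card A \<le> (\<Sum>i\<in>A. sqnorm d (ch_U (S s r) i))"
    using vc alive unfolding valid_choice_def A_def Let_def by blast+
  ultimately have "1 \<le> card A"
    by (metis card_0_eq finite_lessThan finite_subset less_one not_le)
  have "\<epsilon> / 2 \<le> (1 - \<delta>) / 2 * 1"
    using assms(7) by simp
  also have "\<dots> \<le> (1 - \<delta>) / 2 * card A"
    using \<open>1 \<le> card A\<close> assms(5,7) by (intro mult_left_mono) auto
  also have "\<dots> = (1 - \<delta> - (1 - \<delta>) / 2) * card A"
    by (simp add: field_simps)
  finally have "\<epsilon> / 2 \<le> (1 - \<delta> - (1 - \<delta>) / 2) * card A" .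
  then have "g^2 * (\<epsilon> / 2) \<le> g^2 * (\<Sum>i\<in>A. sqnorm d (ch_U (S s r) i))"
    using mass by (intro mult_left_mono) auto
  also have "\<dots> = (\<Sum>i<n. if i \<in> A then g^2 * sqnorm d (ch_U (S s r) i) else 0)"
    using \<open>A \<subseteq> {..<n}\<close>
    by (simp add: sum.If_cases sum_distrib_left Int_absorb1)
  finally show ?thesis
    by (simp add: A_def)
qed

lemma sum_acc_var_ge:
  assumes vs: "valid_strategy n T d g \<delta> S" and r: "r \<in> sign_seqs T d"
    and "alive n d g S r T \<noteq> {}" and "\<epsilon> > 0" and "0 \<le> \<delta>" and "\<delta> \<le> 1 - \<epsilon>"
  shows "real T * (g^2 * (\<epsilon> / 2)) \<le> (\<Sum>i<n. acc_var d g S r T i)"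
proof -
  have "alive n d g S r s \<noteq> {}" if "s < T" for s
    using alive_antimono[OF vs r, of s T] that assms(3) by auto
  then have "(\<Sum>s<T. g^2 * (\<epsilon> / 2))
      \<le> (\<Sum>s<T. \<Sum>i<n. if i \<in> ch_A (S s r) then g^2 * sqnorm d (ch_U (S s r) i) else 0)"
    using sum_step_var_ge[OF vs _ r _ assms(4,5,6)] by (intro sum_mono) auto
  also have "\<dots> = (\<Sum>i<n. acc_var d g S r T i)"
    unfolding acc_var_def by (rule sum.swap)
  finally show ?thesis
    by simp
qed

subsection \<open>The probability bound\<close>

lemma prob_pmf_of_set_le_union_bound:
  fixes p :: real and n :: nat
  assumes "finite \<Omega>" "\<Omega> \<noteq> {}" "\<Omega> \<inter> E \<subseteq> (\<Union>i<n. B i)"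
    and "\<And>i. i < n \<Longrightarrow> real (card (\<Omega> \<inter> B i)) \<le> p * card \<Omega>"
  shows "measure_pmf.prob (pmf_of_set \<Omega>) E \<le> n * p"
proof -
  have "card (\<Omega> \<inter> E) \<le> card (\<Union>i<n. \<Omega> \<inter> B i)"
    using assms(1,3) by (intro card_mono) auto
  also have "\<dots> \<le> (\<Sum>i<n. card (\<Omega> \<inter> B i))"
    by (rule card_UN_le) simp
  finally have "real (card (\<Omega> \<inter> E)) \<le> (\<Sum>i<n. real (card (\<Omega> \<inter> B i)))"
    by (metis of_nat_le_iff of_nat_sum)
  also have "\<dots> \<le> (\<Sum>i<n. p * card \<Omega>)"
    using assms(4) by (intro sum_mono) auto
  finally have "real (card (\<Omega> \<inter> E)) \<le> n * p * card \<Omega>"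
    by simp
  then show ?thesis
    using assms(1,2) by (simp add: measure_pmf_of_set divide_le_eq card_gt_0_iff)
qed

lemma exists_acc_var_ge_log:
  assumes vs: "valid_strategy n T d g \<delta> S" and r: "r \<in> sign_seqs T d"
    and alive: "alive n d g S r T \<noteq> {}" and "g > 0"
    and "\<epsilon> > 0" and "0 \<le> \<delta>" and "\<delta> \<le> 1 - \<epsilon>"
    and T: "6 / (\<epsilon> * g^2) * real n * ln (real n) \<le> T"
  shows "\<exists>i<n. 3 * ln (real n) \<le> acc_var d g S r T i"
proof (rule ccontr)
  assume "\<not> ?thesis"
  then have "acc_var d g S r T i < 3 * ln (real n)" if "i < n" for i
    using that by (simp add: not_le)
  moreover have "n \<noteq> 0"
    using alive by (auto simp: alive_def)
  ultimately have "(\<Sum>i<n. acc_var d g S r T i) < real n * (3 * ln (real n))"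
    using sum_strict_mono[of "{..<n}" "acc_var d g S r T" "\<lambda>_. 3 * ln (real n)"]
    by (simp add: lessThan_empty_iff)
  also have "\<dots> = 6 / (\<epsilon> * g^2) * real n * ln (real n) * (g^2 * (\<epsilon> / 2))"
    using assms(4,5) by (simp add: field_simps)
  also have "\<dots> \<le> T * (g^2 * (\<epsilon> / 2))"
    using T assms(5) by (intro mult_right_mono) auto
  also have "\<dots> \<le> (\<Sum>i<n. acc_var d g S r T i)"
    using sum_acc_var_ge[OF vs r alive assms(5-7)] .
  finally show False
    by simp
qed

lemma prob_alive_le:
  assumes vs: "valid_strategy n T d g \<delta> S" and "n \<ge> 2" and "g > 0" and "g^2 \<le> max_step_var"
    and "\<epsilon> > 0" and "0 \<le> \<delta>" and "\<delta> \<le> 1 - \<epsilon>"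
    and T: "6 / (\<epsilon> * g^2) * real n * ln (real n) \<le> T"
  shows "measure_pmf.prob (pmf_of_set (sign_seqs T d)) {r. alive n d g S r T \<noteq> {}}
    \<le> (1 / dead_val) / (real n)^2"
proof -
  let ?O = "sign_seqs T d" and ?B = "\<lambda>i. {r. 3 * ln (real n) \<le> acc_var d g S r T i}"
  have "?O \<inter> {r. alive n d g S r T \<noteq> {}} \<subseteq> (\<Union>i<n. ?B i)"
    using exists_acc_var_ge_log[OF vs _ _ assms(3,5-8)] by blast
  moreover have "real (card (?O \<inter> ?B i)) \<le> 1 / (real n ^ 3 * dead_val) * card ?O" if "i < n" for i
  proof -
    have "3 * ln (real n) = ln (real n ^ 3)"
      using assms(2) by (simp add: ln_realpow)
    then have "exp (3 * ln (real n)) = real n ^ 3"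
      using assms(2) by simp
    then have "real (card (?O \<inter> ?B i)) * (real n ^ 3 * dead_val) \<le> card ?O"
      using card_acc_var_ge_le[OF vs that assms(4), of "3 * ln (real n)"] by (simp add: Int_def)
    then show ?thesis
      using assms(2) dead_val_pos by (simp add: field_simps)
  qed
  ultimately have "measure_pmf.prob (pmf_of_set ?O) {r. alive n d g S r T \<noteq> {}}
      \<le> n * (1 / (real n ^ 3 * dead_val))"
    by (intro prob_pmf_of_set_le_union_bound) auto
  also have "\<dots> = (1 / dead_val) / (real n)^2"
    using assms(2) by (simp add: field_simps power2_eq_square power3_eq_cube)
  finally show ?thesis .
qed

lemma step_size_pos:
  assumes "n \<ge> 2" "m \<ge> 1"
  shows "step_size n m > 0"
proof -
  have "1 * 2 \<le> real m * real n"
    using assms by (intro mult_mono) auto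
  then show ?thesis
    unfolding step_size_def using assms by simp
qed

lemma step_size_le:
  assumes "n \<ge> 2" "m \<ge> 1"
  shows "step_size n m \<le> 1 / (real n * ln 2)"
proof -
  have "1 * 2 \<le> real m * real n"
    using assms by (intro mult_mono) auto
  then have "ln 2 \<le> ln (real m * real n)"
    by simp
  moreover have "real n * 1 \<le> real n ^ 10 * real m ^ 4"
    using assms by (intro mult_mono self_le_power) auto
  ultimately have "real n * ln 2 \<le> real n ^ 10 * real m ^ 4 * ln (real m * real n)"
    by (intro mult_mono) auto
  moreover have "0 < real n * ln 2"
    using assms by simp
  ultimately show ?thesis
    unfolding step_size_def by (intro divide_left_mono) auto
qed

lemma step_size_sq_le:
  assumes "n \<ge> 2" "m \<ge> 1" and "1 / (max_step_var * (ln 2)^2) \<le> n"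
  shows "(step_size n m)^2 \<le> max_step_var"
proof -
  have "(step_size n m)^2 \<le> (1 / (real n * ln 2))^2"
    using step_size_pos[OF assms(1,2)] step_size_le[OF assms(1,2)] by (intro power_mono) auto
  also have "\<dots> \<le> 1 / (real n * (ln 2)^2)"
    using assms(1) by (simp add: power2_eq_square divide_simps)
  also have "\<dots> \<le> max_step_var"
  proof -
    have "0 < real n * (ln 2)^2"
      using assms(1) by simp
    moreover have "1 \<le> max_step_var * (real n * (ln 2)^2)"
      using assms(3) max_step_var_pos by (simp add: field_simps)
    ultimately show ?thesis
      by (simp add: pos_divide_le_eq)
  qed
  finally show ?thesis .
qed

theorem lemma18:
  fixes \<epsilon> :: real
  assumes "\<epsilon> > 0"
  shows "\<exists>C. \<forall>(n::nat) (m::nat) (d::nat) (\<delta>::real) (S::strategy).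
           n \<ge> 2 \<longrightarrow> m \<ge> 1 \<longrightarrow> 0 \<le> \<delta> \<longrightarrow> \<delta> \<le> 1 - \<epsilon> \<longrightarrow>
           valid_strategy n (num_steps \<epsilon> n m) d (step_size n m) \<delta> S \<longrightarrow>
           measure_pmf.prob (pmf_of_set (sign_seqs (num_steps \<epsilon> n m) d))
             {r. alive n d (step_size n m) S r (num_steps \<epsilon> n m) \<noteq> {}}
           \<le> C / (real n)\<^sup>2"
proof -
  define N where "N = 1 / (max_step_var * (ln 2)^2)"
  show ?thesis
  proof (intro exI[of _ "max (1 / dead_val) (N^2)"] allI impI)
    fix n m d :: nat and \<delta> :: real and S :: strategy
    assume n: "n \<ge> 2" and m: "m \<ge> 1" and "0 \<le> \<delta>" "\<delta> \<le> 1 - \<epsilon>"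
      and vs: "valid_strategy n (num_steps \<epsilon> n m) d (step_size n m) \<delta> S"
    let ?P = "measure_pmf.prob (pmf_of_set (sign_seqs (num_steps \<epsilon> n m) d))
      {r. alive n d (step_size n m) S r (num_steps \<epsilon> n m) \<noteq> {}}"
    have "?P \<le> N^2 / (real n)^2" if "real n < N"
    proof -
      have "?P \<le> 1"
        by (rule measure_pmf.prob_le_1)
      also have "1 \<le> N^2 / (real n)^2"
        using n power_strict_mono[OF that, of 2] by simp
      finally show ?thesis .
    qed
    moreover have "?P \<le> (1 / dead_val) / (real n)^2" if "N \<le> real n"
      using prob_alive_le[OF vs n step_size_pos[OF n m] step_size_sq_le[OF n m] assms \<open>0 \<le> \<delta>\<close> \<open>\<delta> \<le> 1 - \<epsilon>\<close>]
        that real_nat_ceiling_ge N_def by (simp add: num_steps_def)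
    ultimately show "?P \<le> max (1 / dead_val) (N^2) / (real n)^2"
      using divide_right_mono[of "N^2" "max (1 / dead_val) (N^2)" "(real n)^2"]
        divide_right_mono[of "1 / dead_val" "max (1 / dead_val) (N^2)" "(real n)^2"]
      by (cases "real n < N") (auto intro: order_trans)
  qed
qed

end
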